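(* Consider orbit codes in $\mathrm{Gr}_q(k,n)$, each given together with a defining pair $(\mathcal{U},\mathfrak{S})$ with $\mathcal{U}\in\mathrm{Gr}_q(k,n)$ and $\mathfrak{S}<GL_n(\mathbb{F}_q)$. The conjugacy relation $\sim_c$ on orbit codes is an equivalence relation. Moreover, if $\mathcal{C}_1\sim_c\mathcal{C}_2$, then $|\mathcal{C}_1|=|\mathcal{C}_2|$ and $\mathcal{C}_1,\mathcal{C}_2$ have the same distance distribution.
   Context: $\mathrm{Gr}_q(k,n)$ denotes the set of $k$-dimensional subspaces of $\mathbb{F}_q^n$, with subspace distance $d(\mathcal{U}_1,\mathcal{U}_2)=\dim\mathcal{U}_1+\dim\mathcal{U}_2-2\dim(\mathcal{U}_1\cap\mathcal{U}_2)$. $GL_n(\mathbb{F}_q)$ acts on the right on $\mathrm{Gr}_q(k,n)$ by $\mathcal{U}A:=\mathrm{rowsp}(UA)$, where $U\in\mathbb{F}_q^{k\times n}$ is any matrix with $\mathrm{rowsp}(U)=\mathcal{U}$. For $\mathcal{U}\in\mathrm{Gr}_q(k,n)$ and a subgroup $\mathfrak{S}<GL_n(\mathbb{F}_q)$, the orbit code defined by $(\mathcal{U},\mathfrak{S})$ is $\mathcal{C}=\{\mathcal{U}A\mid A\in\mathfrak{S}\}$. Two orbit codes $\mathcal{C}_1$, $\mathcal{C}_2$ defined by $(\mathcal{U}_1,\mathfrak{S}_1)$ and $(\mathcal{U}_2,\mathfrak{S}_2)$ are conjugate, $\mathcal{C}_1\sim_c\mathcal{C}_2$, if there exists $L\in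 GL_n(\mathbb{F}_q)$ with $\mathcal{U}_2=\mathcal{U}_1L$ and $\mathfrak{S}_2=L^{-1}\mathfrak{S}_1L$. The stabilizer of $\mathcal{U}$ is $\mathrm{Stab}(\mathcal{U})=\{A\in GL_n(\mathbb{F}_q)\mid\mathcal{U}A=\mathcal{U}\}$. The distance distribution of the orbit code defined by $(\mathcal{U},\mathfrak{S})$ is the tuple $(D_0,\dots,D_k)$ with $D_i=|\{A\in\mathfrak{S}\mid d(\mathcal{U},\mathcal{U}A)=2i\}|/|\mathfrak{S}\cap\mathrm{Stab}(\mathcal{U})|$. *)

theory Defs
  imports "HOL-Analysis.Analysis"
begin

text \<open>Setting: F_q is a finite field type 'a; F_q^n is 'a^'n (row vectors);
  n x n matrices are 'a^'n^'n.\<close>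

definition Grass :: "nat \<Rightarrow> ('a::{field,finite}^'n) set set" where
  "Grass k = {W. vec.subspace W \<and> vec.dim W = k}"

definition GL :: "('a::{field,finite}^'n^'n) set" where
  "GL = {A. invertible A}"

definition subgroup_GL :: "('a::{field,finite}^'n^'n) set \<Rightarrow> bool" where
  "subgroup_GL S \<longleftrightarrow> S \<subseteq> GL \<and> mat 1 \<in> S \<and>
     (\<forall>A\<in>S. \<forall>B\<in>S. A ** B \<in> S) \<and> (\<forall>A\<in>S. matrix_inv A \<in> S)"

definition act :: "('a::{field,finite}^'n) set \<Rightarrow> 'a^'n^'n \<Rightarrow> ('a^'n) set" where
  "act U A = (\<lambda>v. v v* A) ` U"

definition subspace_dist :: "('a::{field,finite}^'n) set \<Rightarrow> ('a^'n) set \<Rightarrow> nat" where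
  "subspace_dist U1 U2 = vec.dim U1 + vec.dim U2 - 2 * vec.dim (U1 \<inter> U2)"

definition orbit_code :: "('a::{field,finite}^'n) set \<Rightarrow> ('a^'n^'n) set \<Rightarrow> ('a^'n) set set" where
  "orbit_code U S = {act U A | A. A \<in> S}"

definition Stab :: "('a::{field,finite}^'n) set \<Rightarrow> ('a^'n^'n) set" where
  "Stab U = {A \<in> GL. act U A = U}"

definition conj_orbit :: "('a::{field,finite}^'n) set \<times> ('a^'n^'n) set
     \<Rightarrow> ('a^'n) set \<times> ('a^'n^'n) set \<Rightarrow> bool" where
  "conj_orbit P1 P2 \<longleftrightarrow> (\<exists>L \<in> GL. fst P2 = act (fst P1) L \<and>
      snd P2 = (\<lambda>A. matrix_inv L ** A ** L) ` snd P1)"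

definition dist_distr :: "nat \<Rightarrow> ('a::{field,finite}^'n) set \<Rightarrow> ('a^'n^'n) set \<Rightarrow> rat list" where
  "dist_distr k U S = map (\<lambda>i. of_nat (card {A \<in> S. subspace_dist U (act U A) = 2 * i})
        / of_nat (card (S \<inter> Stab U))) [0..<Suc k]"

definition orbit_pairs :: "nat \<Rightarrow> (('a::{field,finite}^'n) set \<times> ('a^'n^'n) set) set" where
  "orbit_pairs k = {(U, S). U \<in> Grass k \<and> subgroup_GL S}"

end

theory Submission
  imports Defs
begin

text \<open>Conjugation by L in GL_n transports the whole situation: W \<mapsto> W L is a bijection on
  subspaces preserving dimensions and intersections, hence the subspace distance, and
  A \<mapsto> L^-1 A L is a bijection S \<rightarrow> L^-1 S L with (U L)(L^-1 A L) = (U A) L. So the orbit code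
  of (U L, L^-1 S L) is the image of that of (U, S) under W \<mapsto> W L, and the sets counted by
  the distance distribution, as well as S \<inter> Stab U, correspond bijectively under conjugation.\<close>

lemma matrix_inv_right:
  fixes L :: "'a::field^'n^'n"
  assumes "invertible L"
  shows "L ** matrix_inv L = mat 1"
  using someI_ex[OF assms[unfolded invertible_def]] unfolding matrix_inv_def by blast

lemma matrix_inv_left:
  fixes L :: "'a::field^'n^'n"
  assumes "invertible L"
  shows "matrix_inv L ** L = mat 1"
  using someI_ex[OF assms[unfolded invertible_def]] unfolding matrix_inv_def by blast

lemma matrix_inv_unique:
  fixes A B :: "'a::field^'n^'n"
  assumes "A ** B = mat 1"
  shows "matrix_inv A = B"
proof -
  have "B ** A = mat 1" using assms matrix_left_right_inverse by blast
  then have inv: "invertible A" using assms unfolding invertible_def by blast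
  have "matrix_inv A = matrix_inv A ** (A ** B)"
    by (simp add: assms)
  also have "\<dots> = (matrix_inv A ** A) ** B"
    by (simp add: matrix_mul_assoc)
  also have "\<dots> = B" by (simp add: matrix_inv_left[OF inv])
  finally show ?thesis .
qed

lemma matrix_inv_mat_1: "matrix_inv (mat 1 :: 'a::field^'n^'n) = mat 1"
  by (rule matrix_inv_unique) simp

lemma invertible_matrix_inv:
  fixes L :: "'a::field^'n^'n"
  assumes "invertible L"
  shows "invertible (matrix_inv L)"
  using matrix_inv_left[OF assms] invertible_right_inverse by blast

lemma matrix_inv_matrix_inv:
  fixes L :: "'a::field^'n^'n"
  assumes "invertible L"
  shows "matrix_inv (matrix_inv L) = L"
  by (rule matrix_inv_unique[OF matrix_inv_left[OF assms]])

lemma matrix_inv_mult: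
  fixes L M :: "'a::field^'n^'n"
  assumes "invertible L" "invertible M"
  shows "matrix_inv (L ** M) = matrix_inv M ** matrix_inv L"
proof (rule matrix_inv_unique)
  have "L ** M ** (matrix_inv M ** matrix_inv L) = L ** (M ** matrix_inv M) ** matrix_inv L"
    by (simp add: matrix_mul_assoc)
  then show "L ** M ** (matrix_inv M ** matrix_inv L) = mat 1"
    by (simp add: matrix_inv_right[OF assms(1)] matrix_inv_right[OF assms(2)])
qed

lemma conj_matrix_inv_cancel:
  fixes L X :: "'a::field^'n^'n"
  assumes "invertible L"
  shows "L ** (matrix_inv L ** X ** L) ** matrix_inv L = X"
proof -
  have "L ** (matrix_inv L ** X ** L) ** matrix_inv L
      = (L ** matrix_inv L) ** X ** (L ** matrix_inv L)"
    by (simp add: matrix_mul_assoc)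
  then show ?thesis by (simp add: matrix_inv_right[OF assms])
qed

lemma inj_conj:
  fixes L :: "'a::field^'n^'n"
  assumes "invertible L"
  shows "inj (\<lambda>A. matrix_inv L ** A ** L)"
  by (rule inj_on_inverseI[where g = "\<lambda>X. L ** X ** matrix_inv L"])
    (rule conj_matrix_inv_cancel[OF assms])

lemma invertible_conj_iff:
  fixes L A :: "'a::field^'n^'n"
  assumes "invertible L"
  shows "invertible (matrix_inv L ** A ** L) \<longleftrightarrow> invertible A"
proof
  assume "invertible (matrix_inv L ** A ** L)"
  then have "invertible (L ** (matrix_inv L ** A ** L) ** matrix_inv L)"
    using assms invertible_matrix_inv invertible_mult by blast
  then show "invertible A" by (simp only: conj_matrix_inv_cancel[OF assms])
qed (intro invertible_mult assms invertible_matrix_inv)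

lemma act_act: "act (act U A) B = act U (A ** B)"
  unfolding act_def image_image vector_matrix_mul_assoc ..

lemma act_mat_1: "act U (mat 1) = U"
  unfolding act_def by simp

lemma act_act_matrix_inv:
  fixes L :: "'a::{field,finite}^'n^'n"
  assumes "invertible L"
  shows "act (act U L) (matrix_inv L) = U"
  by (simp add: act_act act_mat_1 matrix_inv_right[OF assms])

lemma act_conj:
  fixes L :: "'a::{field,finite}^'n^'n"
  assumes "invertible L"
  shows "act (act U L) (matrix_inv L ** A ** L) = act (act U A) L"
proof -
  have "L ** (matrix_inv L ** A ** L) = (L ** matrix_inv L) ** A ** L"
    by (simp add: matrix_mul_assoc)
  then show ?thesis by (simp add: act_act matrix_inv_right[OF assms])
qed

lemma act_eq_iff:
  fixes L :: "'a::{field,finite}^'n^'n"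
  assumes "invertible L"
  shows "act U L = act W L \<longleftrightarrow> U = W"
  by (metis act_act_matrix_inv[OF assms])

lemma inj_vector_matrix_mult:
  fixes L :: "'a::field^'n^'n"
  assumes "invertible L"
  shows "inj (\<lambda>v. v v* L)"
  by (rule inj_on_inverseI[where g = "\<lambda>v. v v* matrix_inv L"])
    (simp add: vector_matrix_mul_assoc matrix_inv_right[OF assms])

lemma dim_act:
  fixes L :: "'a::{field,finite}^'n^'n"
  assumes "invertible L"
  shows "vec.dim (act U L) = vec.dim U"
proof -
  have eq: "(\<lambda>v. v v* L) = (*v) (transpose L)" by (rule ext) simp
  have "inj ((*v) (transpose L))"
    using inj_vector_matrix_mult[OF assms] unfolding eq .
  then have "vec.dim ((*v) (transpose L) ` U) = vec.dim U"
    by (rule vec.dim_image_eq[OF matrix_vector_mul_linear_gen inj_on_subset[OF _ subset_UNIV]])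
  then show ?thesis unfolding act_def eq .
qed

lemma subspace_dist_act:
  fixes L :: "'a::{field,finite}^'n^'n"
  assumes "invertible L"
  shows "subspace_dist (act U L) (act W L) = subspace_dist U W"
proof -
  have "act U L \<inter> act W L = act (U \<inter> W) L"
    unfolding act_def using image_Int[OF inj_vector_matrix_mult[OF assms]] by simp
  then show ?thesis unfolding subspace_dist_def by (simp add: dim_act[OF assms])
qed

lemma conj_in_Stab_iff:
  fixes L :: "'a::{field,finite}^'n^'n"
  assumes "invertible L"
  shows "matrix_inv L ** A ** L \<in> Stab (act U L) \<longleftrightarrow> A \<in> Stab U"
  unfolding Stab_def GL_def
  by (simp add: invertible_conj_iff[OF assms] act_conj[OF assms] act_eq_iff[OF assms])

lemma conj_orbit_refl: "conj_orbit P P"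
proof -
  have "mat 1 \<in> GL" unfolding GL_def invertible_def by auto
  then show ?thesis unfolding conj_orbit_def
    by (intro bexI[of _ "mat 1"]) (simp_all add: act_mat_1 matrix_inv_mat_1)
qed

lemma conj_orbit_sym:
  assumes "conj_orbit P Q"
  shows "conj_orbit Q P"
proof -
  obtain L where L: "invertible L" "fst Q = act (fst P) L"
      "snd Q = (\<lambda>A. matrix_inv L ** A ** L) ` snd P"
    using assms unfolding conj_orbit_def GL_def by blast
  have "fst P = act (fst Q) (matrix_inv L)"
    using L(2) act_act_matrix_inv[OF L(1)] by simp
  moreover have "snd P = (\<lambda>A. matrix_inv (matrix_inv L) ** A ** matrix_inv L) ` snd Q"
    using L(3) by (simp add: image_image matrix_inv_matrix_inv[OF L(1)]
        conj_matrix_inv_cancel[OF L(1)])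
  moreover have "matrix_inv L \<in> GL"
    unfolding GL_def using invertible_matrix_inv[OF L(1)] by simp
  ultimately show ?thesis unfolding conj_orbit_def by blast
qed

lemma conj_orbit_trans:
  assumes "conj_orbit P Q" "conj_orbit Q R"
  shows "conj_orbit P R"
proof -
  obtain L where L: "invertible L" "fst Q = act (fst P) L"
      "snd Q = (\<lambda>A. matrix_inv L ** A ** L) ` snd P"
    using assms(1) unfolding conj_orbit_def GL_def by blast
  obtain M where M: "invertible M" "fst R = act (fst Q) M"
      "snd R = (\<lambda>A. matrix_inv M ** A ** M) ` snd Q"
    using assms(2) unfolding conj_orbit_def GL_def by blast
  have "fst R = act (fst P) (L ** M)"
    using L M by (simp add: act_act)
  moreover have "snd R = (\<lambda>A. matrix_inv (L ** M) ** A ** (L ** M)) ` snd P"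
    using L(3) M(3) by (simp add: image_image matrix_inv_mult[OF L(1) M(1)] matrix_mul_assoc)
  moreover have "L ** M \<in> GL"
    unfolding GL_def using invertible_mult[OF L(1) M(1)] by simp
  ultimately show ?thesis unfolding conj_orbit_def by blast
qed

lemma equiv_conj_orbit:
  "equiv X {(P, Q). P \<in> X \<and> Q \<in> X \<and> conj_orbit P Q}"
  by (rule equivI)
    (auto simp: refl_on_def sym_def trans_def
      intro: conj_orbit_refl conj_orbit_sym conj_orbit_trans)

lemma orbit_code_conj:
  fixes L :: "'a::{field,finite}^'n^'n"
  assumes "invertible L"
  shows "orbit_code (act U L) ((\<lambda>A. matrix_inv L ** A ** L) ` S)
       = (\<lambda>W. act W L) ` orbit_code U S"
  unfolding orbit_code_def by (force simp: act_conj[OF assms])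

lemma card_orbit_code_conj:
  fixes L :: "'a::{field,finite}^'n^'n"
  assumes "invertible L"
  shows "card (orbit_code (act U L) ((\<lambda>A. matrix_inv L ** A ** L) ` S))
       = card (orbit_code U S)"
proof -
  have "inj (\<lambda>W. act W L)" using act_eq_iff[OF assms] by (simp add: inj_def)
  then show ?thesis
    unfolding orbit_code_conj[OF assms] by (simp add: card_image inj_on_subset)
qed

lemma dist_distr_conj:
  fixes L :: "'a::{field,finite}^'n^'n"
  assumes "invertible L"
  shows "dist_distr k (act U L) ((\<lambda>A. matrix_inv L ** A ** L) ` S) = dist_distr k U S"
proof -
  let ?c = "\<lambda>A. matrix_inv L ** A ** L"
  have inj: "inj_on ?c X" for X using inj_conj[OF assms] by (simp add: inj_on_def inj_def)
  have "{A \<in> ?c ` S. subspace_dist (act U L) (act (act U L) A) = 2 * i}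
      = ?c ` {A \<in> S. subspace_dist U (act U A) = 2 * i}" for i
    by (auto simp: act_conj[OF assms] subspace_dist_act[OF assms])
  moreover have "?c ` S \<inter> Stab (act U L) = ?c ` (S \<inter> Stab U)"
    by (auto simp: conj_in_Stab_iff[OF assms])
  ultimately show ?thesis
    unfolding dist_distr_def by (simp add: card_image[OF inj])
qed

theorem mainTheorem5:
  fixes k :: nat
  shows "equiv (orbit_pairs k :: (('a::{field,finite}^'n) set \<times> ('a^'n^'n) set) set)
           {(P1, P2). P1 \<in> orbit_pairs k \<and> P2 \<in> orbit_pairs k \<and> conj_orbit P1 P2}
         \<and> (\<forall>(U1::('a^'n) set) S1 U2 S2. (U1, S1) \<in> orbit_pairs k \<and> (U2, S2) \<in> orbit_pairs k \<and>
              conj_orbit (U1, S1) (U2, S2) \<longrightarrow>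
              card (orbit_code U1 S1) = card (orbit_code U2 S2) \<and>
              dist_distr k U1 S1 = dist_distr k U2 S2)"
proof (rule conjI[OF equiv_conj_orbit], intro allI impI)
  fix U1 U2 :: "('a^'n) set" and S1 S2
  assume "(U1, S1) \<in> orbit_pairs k \<and> (U2, S2) \<in> orbit_pairs k \<and> conj_orbit (U1, S1) (U2, S2)"
  then obtain L where "invertible L" "U2 = act U1 L" "S2 = (\<lambda>A. matrix_inv L ** A ** L) ` S1"
    unfolding conj_orbit_def GL_def by auto
  then show "card (orbit_code U1 S1) = card (orbit_code U2 S2) \<and>
             dist_distr k U1 S1 = dist_distr k U2 S2"
    by (simp add: card_orbit_code_conj dist_distr_conj)
qed

end
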